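(* Consider the Decaying-$\epsilon$-FOCuS procedure (described in the context) on $M>1$ streams with detection threshold $\lambda>0$, where stream 1 has a change-point at $\nu=0$ (so every observation of stream 1 is $\mathcal{N}(\mu_1,1)$ with $\mu_1\ne0$, and all other observations are $\mathcal{N}(0,1)$). Let $t_0$ be the smallest time step such that for all $t>t_0$, $T_t^{(1)}>\max_{m\in[M]\setminus\{1\}}T_t^{(m)}$. Then $t_0$ is $\mathbb{P}_{M,0}$-almost surely finite.
   Context: Setting: there are $M$ independent data streams. At each time $t=1,2,\dots$ an agent selects one stream $A_t\in\{1,\dots,M\}$ and observes one value $X_t\in\mathbb{R}$ from it. The $i$-th observation taken from stream $m$ is denoted $X_i^{(m)}$. Pre-change observations are $\mathcal{N}(0,1)$. Stream 1 has a change-point $\nu$: if $A_t=1$ and $t>\nu$ then $X_t\sim\mathcal{N}(\mu_1,1)$ with $\mu_1\neq0$; otherwise $X_t\sim\mathcal{N}(0,1)$; observations are conditionally independent given the selections. $\mathbb{P}_{M,\nu}$ denotes probability for $M$ streams with change at $\nu$ in stream 1. $\mathcal{F}_t=\sigma(A_1,X_1,\dots,A_t,X_t)$. The sampling process and statistics are defined for all $t\ge 0$ (the sampling rule does not depend on the threshold). Decaying-$\epsilon$-FOCuS: let $N_t^{(m)}$ be the number of times stream $m$ was selected up to and including time $t$. The local GLR statistic is $T_t^{(m)}=\max_{0\le k<N_t^{(m)}}\frac{(\sum_{i=k+1}^{N_t^{(m)}}X_i^{(m)})^2}{2(N_t^{(m)}-k)}$ (and $T_t^{(m)}=0$ if $N_t^{(m)}=0$);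 $T_t=\max_m T_t^{(m)}$ and $M_t=\arg\max_m T_t^{(m)}$. The local change-point estimate $\hat\nu_t^{(m)}$ is the time at which stream $m$'s $\hat k$-th observation was taken, where $\hat k$ is the maximizing index $k$ in $T_t^{(m)}$ (time $0$ if $\hat k=0$ or $N_t^{(m)}=0$); the global estimate is $\hat\nu_t=\hat\nu_t^{(M_t)}$; ties are broken uniformly at random. Initially $\hat\nu_0=0$, $M_0$ uniform on $[M]$. At time $t$, set $\epsilon_t=\min\{1, M/\max(1,t-\hat\nu_{t-1})^{1/3}\}$, draw $G_t\sim\mathrm{Bernoulli}(\epsilon_t)$ (conditionally on $\mathcal{F}_{t-1}$); if $G_t=1$ choose $A_t$ uniformly from $[M]$, otherwise $A_t=M_{t-1}$; then observe $X_t$ and update the statistics. The procedure stops at $\tau=\inf\{t\ge 1: T_t\ge\lambda\}$. *)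

theory Defs
  imports "HOL-Probability.Probability"
begin

text \<open>History of a stream: list of (time of observation, observed value), in order.
  The i-th observation X_i (1-based) of the stream is xs ! (i - 1).\<close>

type_synonym hist = "(nat \<times> real) list"

definition glr_term :: "hist \<Rightarrow> nat \<Rightarrow> real" where
  "glr_term xs k = (\<Sum>i\<in>{k..<length xs}. snd (xs ! i))\<^sup>2 / (2 * real (length xs - k))"

definition Tstat :: "hist \<Rightarrow> real" where
  "Tstat xs = (if xs = [] then 0 else Max (glr_term xs ` {..<length xs}))"

text \<open>Uniform choice from a finite nonempty set S using a Uniform[0,1] variable v.\<close>
definition pick :: "nat set \<Rightarrow> real \<Rightarrow> nat" where
  "pick S v = sorted_list_of_set S ! nat (min \<lfloor>v * real (card S)\<rfloor> (int (card S) - 1))"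

text \<open>Local change-point estimate: time of the k-hat-th observation (0 if k-hat = 0 or no data);
  ties among maximising k broken uniformly at random via v.\<close>
definition nuhat_of :: "hist \<Rightarrow> real \<Rightarrow> nat" where
  "nuhat_of xs v = (if xs = [] then 0 else
     (let k = pick {k. k < length xs \<and> glr_term xs k = Tstat xs} v
      in if k = 0 then 0 else fst (xs ! (k - 1))))"

text \<open>State at time t: (histories of all streams, M_t, nuhat_t).
  y m i : the (i+1)-th observation of stream m (stack-of-rewards model).
  u 0 t : uniform for G_t; u 1 t : uniform for the exploration choice of A_t;
  u 2 t : uniform for tie-breaking in M_t (u 2 0 gives uniform M_0);
  u 3 t : uniform for tie-breaking in khat.\<close>
fun focus_state :: "nat \<Rightarrow> (nat \<Rightarrow> nat \<Rightarrow> real) \<Rightarrow> (nat \<Rightarrow> nat \<Rightarrow> real) \<Rightarrow> nat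
    \<Rightarrow> (nat \<Rightarrow> hist) \<times> nat \<times> nat" where
  "focus_state M y u 0 = ((\<lambda>_. []), pick {1..M} (u 2 0), 0)"
| "focus_state M y u (Suc t) =
    (let (h, mp, nh) = focus_state M y u t;
         n = Suc t;
         eps = min 1 (real M / (max 1 (real n - real nh)) powr (1/3));
         a = (if u 0 n < eps then pick {1..M} (u 1 n) else mp);
         x = y a (length (h a));
         h' = h(a := h a @ [(n, x)]);
         Tmax = Max ((\<lambda>m. Tstat (h' m)) ` {1..M});
         m' = pick {m \<in> {1..M}. Tstat (h' m) = Tmax} (u 2 n);
         nh' = nuhat_of (h' m') (u 3 n)
     in (h', m', nh'))"

definition T_loc :: "nat \<Rightarrow> (nat \<Rightarrow> nat \<Rightarrow> real) \<Rightarrow> (nat \<Rightarrow> nat \<Rightarrow> real) \<Rightarrow> nat \<Rightarrow> nat \<Rightarrow> real" where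
  "T_loc M y u t m = Tstat (fst (focus_state M y u t) m)"

end

theory Submission
  imports Defs "HOL-Real_Asymp.Real_Asymp"
begin

text \<open>Forced exploration picks stream 1 at time \<open>n\<close> with probability at least
  \<open>n\<^sup>-\<^sup>1\<^sup>/\<^sup>3 / M\<close>, independently over time, so by Hoeffding's inequality and
  Borel-Cantelli stream 1 has more than \<open>t\<^sup>2\<^sup>/\<^sup>3 / (2M)\<close> observations at every large time \<open>t\<close>.
  Since \<open>\<mu>\<^sub>1 \<noteq> 0\<close>, a fourth-moment bound and Borel-Cantelli give eventually
  \<open>|S\<^sub>N - N\<mu>\<^sub>1| < |\<mu>\<^sub>1| N / 2\<close> for its partial sums, so its statistic is at least
  \<open>\<mu>\<^sub>1\<^sup>2 N / 8\<close>, of order \<open>t\<^sup>2\<^sup>/\<^sup>3\<close>. For a null stream, a twelfth-moment bound and a union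
  bound over windows show that eventually every window statistic after \<open>n\<close> observations is at
  most \<open>\<surd>n\<close>; hence its statistic is \<open>O(\<surd>t)\<close> however it is sampled, and stream 1
  eventually dominates.\<close>

section \<open>The sampling process\<close>

abbreviation focus_hist ::
    "nat \<Rightarrow> (nat \<Rightarrow> nat \<Rightarrow> real) \<Rightarrow> (nat \<Rightarrow> nat \<Rightarrow> real) \<Rightarrow> nat \<Rightarrow> nat \<Rightarrow> hist"
  where "focus_hist M y u t \<equiv> fst (focus_state M y u t)"

definition sampled_stream :: "nat \<Rightarrow> (nat \<Rightarrow> nat \<Rightarrow> real) \<Rightarrow> nat \<Rightarrow> nat \<Rightarrow> nat \<Rightarrow> nat" where
  "sampled_stream M u n leader nuhat =
     (if u 0 n < min 1 (real M / max 1 (real n - real nuhat) powr (1/3)) then pick {1..M} (u 1 n) else leader)"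

lemma focus_hist_Suc:
  assumes "focus_state M y u t = (h, leader, nuhat)"
  shows "focus_hist M y u (Suc t) =
    (let a = sampled_stream M u (Suc t) leader nuhat in h(a := h a @ [(Suc t, y a (length (h a)))]))"
  using assms by (simp add: Let_def sampled_stream_def)

lemma map_snd_focus_hist: "map snd (focus_hist M y u t m) = map (y m) [0..<length (focus_hist M y u t m)]"
proof (induction t)
  case (Suc t)
  obtain h leader nuhat where st: "focus_state M y u t = (h, leader, nuhat)"
    by (cases "focus_state M y u t") auto
  with Suc.IH show ?case unfolding focus_hist_Suc[OF st] Let_def by auto
qed simp

lemma length_focus_hist_le: "length (focus_hist M y u t m) \<le> t"
proof (induction t)
  case (Suc t)
  obtain h leader nuhat where st: "focus_state M y u t = (h, leader, nuhat)"
    by (cases "focus_state M y u t") auto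
  with Suc.IH show ?case unfolding focus_hist_Suc[OF st] Let_def by auto
qed simp

lemma pick_atLeastAtMost_eq_1:
  assumes "M \<ge> 1" "v < 1 / real M"
  shows "pick {1..M} v = 1"
proof -
  have "v * real M < 1" using assms by (simp add: field_simps)
  then have "\<lfloor>v * real M\<rfloor> \<le> 0" by linarith
  then have "nat (min \<lfloor>v * real (card {1..M})\<rfloor> (int (card {1..M}) - 1)) = 0"
    by (simp add: min.coboundedI1)
  moreover have "sorted_list_of_set {1..M} = [1..<Suc M]"
    by (simp flip: atLeastLessThanSuc_atLeastAtMost)
  then have "sorted_list_of_set {1..M} ! 0 = 1" using assms by (simp del: upt_Suc)
  ultimately show ?thesis unfolding pick_def by simp
qed

lemma exploration_rate_ge:
  assumes "M \<ge> 1" "n \<ge> 1"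
  shows "real n powr (-1/3) \<le> min 1 (real M / max 1 (real n - real nuhat) powr (1/3))"
proof -
  have "max 1 (real n - real nuhat) powr (1/3) \<le> real n powr (1/3)"
    using assms by (intro powr_mono2) auto
  then have "1 / real n powr (1/3) \<le> real M / max 1 (real n - real nuhat) powr (1/3)"
    using assms by (intro frac_le) auto
  moreover have "real n powr (-1/3) \<le> 1"
    using assms by (simp add: powr_le_one_le ge_one_powr_ge_zero powr_minus_divide)
  ultimately show ?thesis by (simp add: powr_minus_divide)
qed

text \<open>A condition for sampling stream 1 at time \<open>n\<close> that does not depend on the state:
  the exploration probability is at least \<open>n\<^sup>-\<^sup>1\<^sup>/\<^sup>3\<close> whatever the change-point estimate is.\<close>
definition explores_stream1 :: "nat \<Rightarrow> (nat \<Rightarrow> nat \<Rightarrow> real) \<Rightarrow> nat \<Rightarrow> bool" where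
  "explores_stream1 M u n \<longleftrightarrow> u 0 n < real n powr (-1/3) \<and> u 1 n < 1 / real M"

lemma sampled_stream_eq_1:
  assumes "explores_stream1 M u n" "M \<ge> 1" "n \<ge> 1"
  shows "sampled_stream M u n leader nuhat = 1"
  using assms exploration_rate_ge[OF assms(2,3), of nuhat] pick_atLeastAtMost_eq_1[OF assms(2)]
  by (auto simp: sampled_stream_def explores_stream1_def)

lemma card_explores_stream1_le:
  assumes "M \<ge> 1"
  shows "card {n\<in>{1..t}. explores_stream1 M u n} \<le> length (focus_hist M y u t 1)"
proof (induction t)
  case (Suc t)
  obtain h leader nuhat where st: "focus_state M y u t = (h, leader, nuhat)"
    by (cases "focus_state M y u t") auto
  have IH: "card {n\<in>{1..t}. explores_stream1 M u n} \<le> length (h 1)" using Suc.IH st by simp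
  have len: "length (h 1) \<le> length (focus_hist M y u (Suc t) 1)"
    unfolding focus_hist_Suc[OF st] Let_def by simp
  show ?case
  proof (cases "explores_stream1 M u (Suc t)")
    case True
    then have "{n\<in>{1..Suc t}. explores_stream1 M u n} = insert (Suc t) {n\<in>{1..t}. explores_stream1 M u n}"
      by (auto simp: le_Suc_eq)
    moreover have "length (focus_hist M y u (Suc t) 1) = Suc (length (h 1))"
      using sampled_stream_eq_1[OF True assms] unfolding focus_hist_Suc[OF st] Let_def by simp
    ultimately show ?thesis using IH by simp
  next
    case False
    then have "{n\<in>{1..Suc t}. explores_stream1 M u n} = {n\<in>{1..t}. explores_stream1 M u n}"
      by (auto simp: le_Suc_eq)
    then show ?thesis using IH len by simp
  qed
qed simp

section \<open>Window statistics\<close>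

definition window_glr :: "(nat \<Rightarrow> real) \<Rightarrow> nat \<Rightarrow> nat \<Rightarrow> real" where
  "window_glr f k n = (\<Sum>i\<in>{k..<n}. f i)\<^sup>2 / (2 * real (n - k))"

lemma glr_term_focus_hist:
  "glr_term (focus_hist M y u t m) k = window_glr (y m) k (length (focus_hist M y u t m))"
proof -
  have "snd (focus_hist M y u t m ! i) = y m i" if i: "i < length (focus_hist M y u t m)" for i
  proof -
    have "snd (focus_hist M y u t m ! i) = map snd (focus_hist M y u t m) ! i" using i by simp
    also have "\<dots> = y m i" using i by (simp only: map_snd_focus_hist) simp
    finally show ?thesis .
  qed
  then show ?thesis
    unfolding glr_term_def window_glr_def by (intro arg_cong2[where f="\<lambda>a b. a\<^sup>2 / b"] sum.cong) auto
qed

lemma T_loc_le: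
  assumes "0 \<le> B"
    and "\<And>k. k < length (focus_hist M y u t m) \<Longrightarrow> window_glr (y m) k (length (focus_hist M y u t m)) \<le> B"
  shows "T_loc M y u t m \<le> B"
  using assms unfolding T_loc_def Tstat_def by (auto simp: glr_term_focus_hist intro!: Max.boundedI)

lemma window_glr_0_le_T_loc:
  assumes "length (focus_hist M y u t m) > 0"
  shows "window_glr (y m) 0 (length (focus_hist M y u t m)) \<le> T_loc M y u t m"
  using assms unfolding T_loc_def Tstat_def by (auto simp: glr_term_focus_hist[symmetric] intro!: Max_ge)

lemma window_glr_le_of_abs_sum_less:
  assumes "k < n" "\<bar>\<Sum>i\<in>{k..<n}. f i\<bar> < sqrt (2 * real (n - k) * c)"
  shows "window_glr f k n \<le> c"
proof -
  have "0 < sqrt (2 * real (n - k) * c)" using assms(2) abs_ge_zero by (rule le_less_trans[rotated])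
  then have radicand_pos: "0 < 2 * real (n - k) * c" by (simp only: real_sqrt_gt_0_iff)
  have "\<bar>\<Sum>i\<in>{k..<n}. f i\<bar>\<^sup>2 < (sqrt (2 * real (n - k) * c))\<^sup>2"
    using assms(2) by (intro power_strict_mono) auto
  then have "(\<Sum>i\<in>{k..<n}. f i)\<^sup>2 < 2 * real (n - k) * c"
    by (simp only: power2_abs real_sqrt_pow2[OF less_imp_le[OF radicand_pos]])
  with assms(1) show ?thesis by (simp add: window_glr_def divide_le_eq mult.commute)
qed

lemma window_glr_0_ge_of_abs_sum_near:
  assumes "\<bar>(\<Sum>i<N. f i) - real N * \<mu>\<bar> < \<bar>\<mu>\<bar> * real N / 2"
  shows "\<mu>\<^sup>2 / 8 * real N \<le> window_glr f 0 N"
proof (cases "N = 0")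
  case False
  have "\<bar>real N * \<mu>\<bar> - \<bar>\<Sum>i<N. f i\<bar> \<le> \<bar>(\<Sum>i<N. f i) - real N * \<mu>\<bar>"
    by (metis abs_minus_commute abs_triangle_ineq2)
  moreover have "\<bar>real N * \<mu>\<bar> = \<bar>\<mu>\<bar> * real N" by (simp add: abs_mult)
  ultimately have "\<bar>\<mu>\<bar> * real N / 2 \<le> \<bar>\<Sum>i<N. f i\<bar>" using assms by linarith
  then have "(\<bar>\<mu>\<bar> * real N / 2)\<^sup>2 \<le> \<bar>\<Sum>i<N. f i\<bar>\<^sup>2" by (intro power_mono) auto
  then have sq: "\<mu>\<^sup>2 * (real N)\<^sup>2 / 4 \<le> (\<Sum>i<N. f i)\<^sup>2" by (simp add: power_mult_distrib power_divide)
  from False have "\<mu>\<^sup>2 / 8 * real N = \<mu>\<^sup>2 * (real N)\<^sup>2 / 4 / (2 * real N)"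
    by (simp add: power2_eq_square)
  also have "\<dots> \<le> (\<Sum>i<N. f i)\<^sup>2 / (2 * real N)" using sq by (intro divide_right_mono) auto
  also have "\<dots> = window_glr f 0 N" by (simp add: window_glr_def atLeast0LessThan)
  finally show ?thesis .
qed (simp add: window_glr_def)

section \<open>Domination along a sample path\<close>

lemma eventually_le_imp_le_add_const:
  fixes g :: "nat \<Rightarrow> nat \<Rightarrow> real"
  assumes "eventually (\<lambda>n. \<forall>k<n. g n k \<le> b n) sequentially"
  obtains K where "0 \<le> K" "\<And>n k. k < n \<Longrightarrow> g n k \<le> b n + K"
proof -
  obtain n0 where n0: "\<And>n k. n \<ge> n0 \<Longrightarrow> k < n \<Longrightarrow> g n k \<le> b n"
    using assms by (auto simp: eventually_sequentially)
  define K where "K = (\<Sum>n<n0. \<Sum>k<n. \<bar>g n k - b n\<bar>)"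
  have K_nonneg: "0 \<le> K" unfolding K_def by (intro sum_nonneg) auto
  have "g n k \<le> b n + K" if "k < n" for n k
  proof (cases "n < n0")
    case True
    have "g n k - b n \<le> \<bar>g n k - b n\<bar>" by simp
    also have "\<dots> \<le> (\<Sum>k<n. \<bar>g n k - b n\<bar>)" using that by (intro member_le_sum) auto
    also have "\<dots> \<le> K"
      unfolding K_def using True by (intro member_le_sum[where f="\<lambda>n. \<Sum>k<n. \<bar>g n k - b n\<bar>"]) (auto intro: sum_nonneg)
    finally show ?thesis by simp
  qed (use n0[of n k] that K_nonneg in simp)
  with K_nonneg that show ?thesis by blast
qed

lemma T_loc_le_sqrt_add_const:
  assumes "eventually (\<lambda>n. \<forall>k<n. window_glr (y m) k n \<le> sqrt (real n)) sequentially"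
  obtains K where "\<And>t. T_loc M y u t m \<le> sqrt (real t) + K"
proof -
  obtain K where K: "0 \<le> K" "\<And>n k. k < n \<Longrightarrow> window_glr (y m) k n \<le> sqrt (real n) + K"
    using eventually_le_imp_le_add_const[OF assms] by blast
  have "T_loc M y u t m \<le> sqrt (real t) + K" for t
  proof (rule T_loc_le)
    show "0 \<le> sqrt (real t) + K" using K by simp
    fix k assume "k < length (focus_hist M y u t m)"
    then have "window_glr (y m) k (length (focus_hist M y u t m)) \<le> sqrt (length (focus_hist M y u t m)) + K"
      by (rule K(2))
    also have "\<dots> \<le> sqrt (real t) + K" using length_focus_hist_le by simp
    finally show "window_glr (y m) k (length (focus_hist M y u t m)) \<le> sqrt (real t) + K" .
  qed
  with that show ?thesis by blast
qed

lemma eventually_stream1_dominates: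
  fixes c d :: real
  assumes "M \<ge> 2" "c > 0" "d > 0"
    and null: "\<forall>m\<in>{2..M}. eventually (\<lambda>n. \<forall>k<n. window_glr (y m) k n \<le> sqrt (real n)) sequentially"
    and signal: "eventually (\<lambda>N. c * real N \<le> window_glr (y 1) 0 N) sequentially"
    and explore: "eventually (\<lambda>t. d * real t powr (2/3) < real (card {n\<in>{1..t}. explores_stream1 M u n})) sequentially"
  shows "eventually (\<lambda>t. Max ((\<lambda>m. T_loc M y u t m) ` {2..M}) < T_loc M y u t 1) sequentially"
proof -
  let ?N = "\<lambda>t. length (focus_hist M y u t 1)"
  obtain N0 where N0: "\<And>N. N \<ge> N0 \<Longrightarrow> c * real N \<le> window_glr (y 1) 0 N"
    using signal by (auto simp: eventually_sequentially)
  have "eventually (\<lambda>t. d * real t powr (2/3) \<le> real (?N t)) sequentially"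
    using explore
  proof eventually_elim
    case (elim t)
    have "card {n\<in>{1..t}. explores_stream1 M u n} \<le> ?N t"
      using assms(1) by (intro card_explores_stream1_le) simp
    with elim show ?case by linarith
  qed
  moreover have "eventually (\<lambda>t. real (N0 + 1) \<le> d * real t powr (2/3)) sequentially"
    using \<open>d > 0\<close> by real_asymp
  ultimately have T1: "eventually (\<lambda>t. c * d * real t powr (2/3) \<le> T_loc M y u t 1) sequentially"
  proof eventually_elim
    case (elim t)
    then have "c * d * real t powr (2/3) \<le> c * real (?N t)" using \<open>c > 0\<close> by simp
    also have "\<dots> \<le> window_glr (y 1) 0 (?N t)" using elim by (intro N0) linarith
    also have "\<dots> \<le> T_loc M y u t 1" using elim by (intro window_glr_0_le_T_loc) linarith
    finally show ?case .
  qed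
  have cd: "c * d > 0" using assms by simp
  have "eventually (\<lambda>t. T_loc M y u t m < T_loc M y u t 1) sequentially" if m: "m \<in> {2..M}" for m
  proof -
    obtain K where K: "\<And>t. T_loc M y u t m \<le> sqrt (real t) + K"
      using T_loc_le_sqrt_add_const null m by blast
    have "eventually (\<lambda>t. sqrt (real t) + K < c * d * real t powr (2/3)) sequentially"
      using cd by real_asymp
    with T1 show ?thesis
    proof eventually_elim
      case (elim t)
      with K[of t] show ?case by linarith
    qed
  qed
  then have "eventually (\<lambda>t. \<forall>m\<in>{2..M}. T_loc M y u t m < T_loc M y u t 1) sequentially"
    by (intro eventually_ball_finite) auto
  then show ?thesis by eventually_elim (use assms(1) in simp)
qed

section \<open>Almost sure bounds\<close>

lemma (in prob_space) AE_eventually_notin_of_prob_le_O_inverse_square: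
  assumes "\<And>n. A n \<in> events"
    and "eventually (\<lambda>n. prob (A n) \<le> b n) sequentially" "b \<in> O(\<lambda>n. 1 / real n ^ 2)"
  shows "AE \<omega> in M. eventually (\<lambda>n. \<omega> \<notin> A n) sequentially"
proof -
  have b_summable: "summable b"
  proof (rule summable_comparison_test_bigo[OF _ assms(3)])
    have "summable (\<lambda>n. inverse (real n ^ 2))" by (rule inverse_power_summable) simp
    then show "summable (\<lambda>n. norm (1 / real n ^ 2))" by (simp add: divide_inverse)
  qed
  obtain N where N: "\<And>n. n \<ge> N \<Longrightarrow> norm (prob (A n)) \<le> b n"
    using assms(2) by (auto simp: eventually_sequentially)
  have "summable (\<lambda>n. prob (A n))" by (rule summable_comparison_test'[OF b_summable N])
  then have "AE \<omega> in M. eventually (\<lambda>n. \<omega> \<in> space M - A n) sequentially"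
    by (intro borel_cantelli_AE1[OF assms(1)]) (simp_all add: emeasure_eq_measure)
  then show ?thesis by (rule eventually_mono) (erule eventually_mono, simp)
qed

lemma (in prob_space) normal_tail_le_moment:
  fixes Z :: "'a \<Rightarrow> real"
  assumes D: "distributed M lborel Z (\<lambda>x. ennreal (normal_density \<mu> \<sigma> x))" and "\<sigma> > 0" "a > 0"
  shows "prob {\<omega>\<in>space M. a \<le> \<bar>Z \<omega> - \<mu>\<bar>} \<le> fact (2*k) / (2^k * fact k) * (\<sigma>\<^sup>2 / a\<^sup>2)^k"
proof -
  have [measurable]: "Z \<in> borel_measurable M" using distributed_measurable[OF D] by simp
  have moment: "has_bochner_integral lborel (\<lambda>x. normal_density \<mu> \<sigma> x * (x - \<mu>)^(2*k))
      (fact (2*k) / ((2 / \<sigma>\<^sup>2)^k * fact k))"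
    using \<open>\<sigma> > 0\<close> by (rule normal_moment_even)
  have integrable: "integrable M (\<lambda>\<omega>. (Z \<omega> - \<mu>)^(2*k))"
    using distributed_integrable[OF D, of "\<lambda>x. (x - \<mu>)^(2*k)"] moment by (simp add: has_bochner_integral_iff)
  have expectation: "expectation (\<lambda>\<omega>. (Z \<omega> - \<mu>)^(2*k)) = fact (2*k) / ((2 / \<sigma>\<^sup>2)^k * fact k)"
    using distributed_integral[OF D, of "\<lambda>x. (x - \<mu>)^(2*k)"] moment by (simp add: has_bochner_integral_iff)
  have "prob {\<omega>\<in>space M. a \<le> \<bar>Z \<omega> - \<mu>\<bar>} \<le> prob {\<omega>\<in>space M. a^(2*k) \<le> (Z \<omega> - \<mu>)^(2*k)}"
  proof (rule finite_measure_mono)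
    have "a^(2*k) \<le> (Z \<omega> - \<mu>)^(2*k)" if "a \<le> \<bar>Z \<omega> - \<mu>\<bar>" for \<omega>
      using power_mono[OF that, of "2*k"] \<open>a > 0\<close> by (simp add: power_even_abs)
    then show "{\<omega>\<in>space M. a \<le> \<bar>Z \<omega> - \<mu>\<bar>} \<subseteq> {\<omega>\<in>space M. a^(2*k) \<le> (Z \<omega> - \<mu>)^(2*k)}" by auto
  qed measurable
  also have "\<dots> \<le> expectation (\<lambda>\<omega>. (Z \<omega> - \<mu>)^(2*k)) / a^(2*k)"
    using integrable \<open>a > 0\<close> by (intro integral_Markov_inequality_measure[where A="space M"]) auto
  also have "\<dots> = fact (2*k) / (2^k * fact k) * (\<sigma>\<^sup>2 / a\<^sup>2)^k"
    unfolding expectation using \<open>\<sigma> > 0\<close> \<open>a > 0\<close> by (simp add: power_divide power_mult)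
  finally show ?thesis .
qed

lemma (in prob_space) distributed_sum_iid_normal:
  assumes indep: "indep_vars (\<lambda>_. borel) Z UNIV"
    and normal: "\<And>i. distributed M lborel (Z i) (\<lambda>x. ennreal (normal_density \<mu> 1 x))"
    and "finite S" "S \<noteq> {}"
  shows "distributed M lborel (\<lambda>\<omega>. \<Sum>i\<in>S. Z i \<omega>)
           (\<lambda>x. ennreal (normal_density (real (card S) * \<mu>) (sqrt (real (card S))) x))"
proof -
  have "distributed M lborel (\<lambda>\<omega>. \<Sum>i\<in>S. Z i \<omega>) (normal_density (\<Sum>i\<in>S. \<mu>) (sqrt (\<Sum>i\<in>S. 1\<^sup>2)))"
    by (rule sum_indep_normal) (use assms indep_vars_subset[OF indep] in auto)
  then show ?thesis by simp
qed

text \<open>\<open>10395 = 11!!\<close> is the twelfth moment of the standard normal distribution.\<close>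
lemma (in prob_space) prob_window_sum_ge_le:
  assumes indep: "indep_vars (\<lambda>_. borel) Z UNIV"
    and normal: "\<And>i. distributed M lborel (Z i) (\<lambda>x. ennreal (normal_density 0 1 x))" and "k < n"
  shows "prob {\<omega>\<in>space M. sqrt (2 * real (n - k) * sqrt n) \<le> \<bar>\<Sum>i\<in>{k..<n}. Z i \<omega>\<bar>}
           \<le> 10395 * (1 / (2 * sqrt n))^6"
proof -
  define L where "L = real (n - k)"
  have L: "L > 0" "real n > 0" using \<open>k < n\<close> by (auto simp: L_def)
  have "distributed M lborel (\<lambda>\<omega>. \<Sum>i\<in>{k..<n}. Z i \<omega>) (\<lambda>x. ennreal (normal_density 0 (sqrt L) x))"
    using distributed_sum_iid_normal[OF indep normal, of "{k..<n}"] \<open>k < n\<close> by (simp add: L_def)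
  from normal_tail_le_moment[OF this, of "sqrt (2 * L * sqrt n)" 6]
  have "prob {\<omega>\<in>space M. sqrt (2 * L * sqrt n) \<le> \<bar>\<Sum>i\<in>{k..<n}. Z i \<omega>\<bar>}
      \<le> fact (2*6) / (2^6 * fact 6) * ((sqrt L)\<^sup>2 / (sqrt (2 * L * sqrt n))\<^sup>2)^6"
    using L by simp
  also have "(sqrt L)\<^sup>2 / (sqrt (2 * L * sqrt n))\<^sup>2 = 1 / (2 * sqrt n)"
    using L by simp
  also have "fact (2*6) / (2^6 * fact 6) = (10395 :: real)" by (simp add: fact_numeral)
  finally show ?thesis by (simp add: L_def)
qed

text \<open>Each window tail is \<open>O(n\<^sup>-\<^sup>3)\<close>; a union bound over the \<open>n\<close> windows ending at \<open>n\<close>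
  leaves a summable \<open>O(n\<^sup>-\<^sup>2)\<close>.\<close>
lemma (in prob_space) AE_eventually_window_glr_le_sqrt:
  assumes indep: "indep_vars (\<lambda>_. borel) Z UNIV"
    and normal: "\<And>i. distributed M lborel (Z i) (\<lambda>x. ennreal (normal_density 0 1 x))"
  shows "AE \<omega> in M. eventually (\<lambda>n. \<forall>k<n. window_glr (\<lambda>i. Z i \<omega>) k n \<le> sqrt (real n)) sequentially"
proof -
  have [measurable]: "Z i \<in> borel_measurable M" for i
    using distributed_measurable[OF normal] by simp
  define W where "W n k = {\<omega>\<in>space M. sqrt (2 * real (n - k) * sqrt n) \<le> \<bar>\<Sum>i\<in>{k..<n}. Z i \<omega>\<bar>}" for n k
  define A where "A n = (\<Union>k<n. W n k)" for n
  have [measurable]: "W n k \<in> events" for n k unfolding W_def by measurable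
  have A_events: "A n \<in> events" for n unfolding A_def by measurable
  have "prob (A n) \<le> real n * (10395 * (1 / (2 * sqrt n))^6)" for n
  proof -
    have "prob (A n) \<le> (\<Sum>k<n. prob (W n k))"
      unfolding A_def by (intro finite_measure_subadditive_finite) auto
    also have "\<dots> \<le> (\<Sum>k<n. 10395 * (1 / (2 * sqrt n))^6)"
      unfolding W_def by (intro sum_mono prob_window_sum_ge_le[OF indep normal]) simp
    finally show ?thesis by simp
  qed
  moreover have "(\<lambda>n. real n * (10395 * (1 / (2 * sqrt n))^6)) \<in> O(\<lambda>n. 1 / real n ^ 2)"
    by real_asymp
  ultimately have "AE \<omega> in M. eventually (\<lambda>n. \<omega> \<notin> A n) sequentially"
    by (intro AE_eventually_notin_of_prob_le_O_inverse_square A_events) auto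
  then show ?thesis
  proof (rule AE_mp, intro AE_I2 impI)
    fix \<omega> assume "\<omega> \<in> space M" "eventually (\<lambda>n. \<omega> \<notin> A n) sequentially"
    then show "eventually (\<lambda>n. \<forall>k<n. window_glr (\<lambda>i. Z i \<omega>) k n \<le> sqrt (real n)) sequentially"
    proof (elim eventually_mono, intro allI impI)
      fix n k assume "\<omega> \<notin> A n" "k < n"
      with \<open>\<omega> \<in> space M\<close> show "window_glr (\<lambda>i. Z i \<omega>) k n \<le> sqrt (real n)"
        by (intro window_glr_le_of_abs_sum_less) (auto simp: A_def W_def not_le)
    qed
  qed
qed

lemma (in prob_space) prob_partial_sum_far_le:
  assumes indep: "indep_vars (\<lambda>_. borel) Z UNIV"
    and normal: "\<And>i. distributed M lborel (Z i) (\<lambda>x. ennreal (normal_density \<mu> 1 x))"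
    and "\<mu> \<noteq> 0" "N \<ge> 1"
  shows "prob {\<omega>\<in>space M. \<bar>\<mu>\<bar> * real N / 2 \<le> \<bar>(\<Sum>i<N. Z i \<omega>) - real N * \<mu>\<bar>}
           \<le> 3 * (4 / (\<mu>\<^sup>2 * real N))\<^sup>2"
proof -
  have "distributed M lborel (\<lambda>\<omega>. \<Sum>i<N. Z i \<omega>) (\<lambda>x. ennreal (normal_density (real N * \<mu>) (sqrt N) x))"
    using distributed_sum_iid_normal[OF indep normal, of "{..<N}"] \<open>N \<ge> 1\<close> by (simp add: lessThan_empty_iff)
  from normal_tail_le_moment[OF this, of "\<bar>\<mu>\<bar> * real N / 2" 2]
  have "prob {\<omega>\<in>space M. \<bar>\<mu>\<bar> * real N / 2 \<le> \<bar>(\<Sum>i<N. Z i \<omega>) - real N * \<mu>\<bar>}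
      \<le> fact (2*2) / (2^2 * fact 2) * ((sqrt N)\<^sup>2 / (\<bar>\<mu>\<bar> * real N / 2)\<^sup>2)^2"
    using assms(3,4) by simp
  also have "(sqrt N)\<^sup>2 / (\<bar>\<mu>\<bar> * real N / 2)\<^sup>2 = 4 / (\<mu>\<^sup>2 * real N)"
    using assms(3,4) by (simp add: power_mult_distrib power_divide power2_eq_square)
  also have "fact (2*2) / (2^2 * fact 2) = (3 :: real)" by (simp add: fact_numeral)
  finally show ?thesis .
qed

lemma (in prob_space) AE_eventually_window_glr_0_ge:
  assumes indep: "indep_vars (\<lambda>_. borel) Z UNIV"
    and normal: "\<And>i. distributed M lborel (Z i) (\<lambda>x. ennreal (normal_density \<mu> 1 x))" and "\<mu> \<noteq> 0"
  shows "AE \<omega> in M. eventually (\<lambda>N. \<mu>\<^sup>2 / 8 * real N \<le> window_glr (\<lambda>i. Z i \<omega>) 0 N) sequentially"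
proof -
  have [measurable]: "Z i \<in> borel_measurable M" for i
    using distributed_measurable[OF normal] by simp
  define B where "B N = {\<omega>\<in>space M. \<bar>\<mu>\<bar> * real N / 2 \<le> \<bar>(\<Sum>i<N. Z i \<omega>) - real N * \<mu>\<bar>}" for N
  have B_events: "B N \<in> events" for N unfolding B_def by measurable
  have "eventually (\<lambda>N. prob (B N) \<le> 3 * (4 / (\<mu>\<^sup>2 * real N))\<^sup>2) sequentially"
    unfolding B_def using prob_partial_sum_far_le[OF indep normal \<open>\<mu> \<noteq> 0\<close>]
    by (rule eventually_mono[OF eventually_ge_at_top[of 1]])
  moreover have "\<mu>\<^sup>2 > 0" using \<open>\<mu> \<noteq> 0\<close> by simp
  then have "(\<lambda>N. 3 * (4 / (\<mu>\<^sup>2 * real N))\<^sup>2) \<in> O(\<lambda>N. 1 / real N ^ 2)"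
    by real_asymp
  ultimately have "AE \<omega> in M. eventually (\<lambda>N. \<omega> \<notin> B N) sequentially"
    by (intro AE_eventually_notin_of_prob_le_O_inverse_square B_events)
  then show ?thesis
  proof (rule AE_mp, intro AE_I2 impI)
    fix \<omega> assume "\<omega> \<in> space M" "eventually (\<lambda>N. \<omega> \<notin> B N) sequentially"
    then show "eventually (\<lambda>N. \<mu>\<^sup>2 / 8 * real N \<le> window_glr (\<lambda>i. Z i \<omega>) 0 N) sequentially"
    proof (elim eventually_mono)
      fix N assume "\<omega> \<notin> B N"
      with \<open>\<omega> \<in> space M\<close> show "\<mu>\<^sup>2 / 8 * real N \<le> window_glr (\<lambda>i. Z i \<omega>) 0 N"
        by (intro window_glr_0_ge_of_abs_sum_near) (simp add: B_def not_le)
    qed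
  qed
qed

lemma (in prob_space) prob_sum_le_half_powr:
  fixes Z :: "nat \<Rightarrow> 'a \<Rightarrow> real" and c :: real
  assumes indep: "indep_vars (\<lambda>_. borel) Z UNIV" and range: "\<And>n \<omega>. Z n \<omega> \<in> {0..1}"
    and mean: "\<And>n. n \<ge> 1 \<Longrightarrow> c * real n powr (-1/3) \<le> expectation (Z n)" and "c > 0" "t \<ge> 1"
  shows "prob {\<omega>\<in>space M. (\<Sum>n\<in>{1..t}. Z n \<omega>) \<le> c / 2 * real t powr (2/3)}
           \<le> exp (-2 * (c / 2 * real t powr (2/3))\<^sup>2 / real t)"
proof -
  define q where "q = c / 2 * real t powr (2/3)"
  define \<mu> where "\<mu> = (\<Sum>n\<in>{1..t}. expectation (Z n))"
  interpret Hoeffding_ineq M "{1..t}" Z "\<lambda>_. 0" "\<lambda>_. 1" \<mu>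
    by unfold_locales (use indep_vars_subset[OF indep] range in \<open>auto simp: \<mu>_def\<close>)
  have lower: "c * real t powr (-1/3) \<le> expectation (Z n)" if "n \<in> {1..t}" for n
  proof -
    have "real t powr (-1/3) \<le> real n powr (-1/3)" using that by (intro powr_mono2') auto
    then have "c * real t powr (-1/3) \<le> c * real n powr (-1/3)" using \<open>c > 0\<close> by simp
    also have "\<dots> \<le> expectation (Z n)" using mean that by simp
    finally show ?thesis .
  qed
  have "2 * q = c * (real t * real t powr (-1/3))"
    using \<open>t \<ge> 1\<close> by (simp add: q_def powr_mult_base)
  also have "\<dots> = real (card {1..t}) * (c * real t powr (-1/3))" by simp
  also have "\<dots> \<le> \<mu>" unfolding \<mu>_def by (rule sum_bounded_below) (rule lower)
  finally have q_le: "q \<le> \<mu> - q" by simp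
  have q_nonneg: "0 \<le> q" using \<open>c > 0\<close> by (simp add: q_def)
  have "prob {\<omega>\<in>space M. (\<Sum>n\<in>{1..t}. Z n \<omega>) \<le> q}
      = prob {\<omega>\<in>space M. (\<Sum>n\<in>{1..t}. Z n \<omega>) \<le> \<mu> - (\<mu> - q)}"
    by simp
  also have "\<dots> \<le> exp (-2 * (\<mu> - q)\<^sup>2 / (\<Sum>n\<in>{1..t}. (1 - 0)\<^sup>2))"
    using q_le q_nonneg \<open>t \<ge> 1\<close> by (intro Hoeffding_ineq_le) auto
  also have "\<dots> \<le> exp (-2 * q\<^sup>2 / real t)"
  proof -
    have "q\<^sup>2 \<le> (\<mu> - q)\<^sup>2" using q_le q_nonneg by (intro power_mono) auto
    then have "-2 * (\<mu> - q)\<^sup>2 / real t \<le> -2 * q\<^sup>2 / real t" by (intro divide_right_mono) auto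
    then show ?thesis by simp
  qed
  finally show ?thesis unfolding q_def .
qed

lemma (in prob_space) AE_eventually_sum_gt_half_powr:
  fixes Z :: "nat \<Rightarrow> 'a \<Rightarrow> real" and c :: real
  assumes indep: "indep_vars (\<lambda>_. borel) Z UNIV" and range: "\<And>n \<omega>. Z n \<omega> \<in> {0..1}"
    and mean: "\<And>n. n \<ge> 1 \<Longrightarrow> c * real n powr (-1/3) \<le> expectation (Z n)" and "c > 0"
  shows "AE \<omega> in M. eventually (\<lambda>t. c / 2 * real t powr (2/3) < (\<Sum>n\<in>{1..t}. Z n \<omega>)) sequentially"
proof -
  have [measurable]: "Z n \<in> borel_measurable M" for n using indep by (auto simp: indep_vars_def)
  define D where "D t = {\<omega>\<in>space M. (\<Sum>n\<in>{1..t}. Z n \<omega>) \<le> c / 2 * real t powr (2/3)}" for t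
  have D_events: "D t \<in> events" for t unfolding D_def by measurable
  have "eventually (\<lambda>t. prob (D t) \<le> exp (-2 * (c / 2 * real t powr (2/3))\<^sup>2 / real t)) sequentially"
    unfolding D_def using prob_sum_le_half_powr[OF indep range mean \<open>c > 0\<close>]
    by (rule eventually_mono[OF eventually_ge_at_top[of 1]])
  moreover have "(\<lambda>t. exp (-2 * (c / 2 * real t powr (2/3))\<^sup>2 / real t)) \<in> O(\<lambda>t. 1 / real t ^ 2)"
    using \<open>c > 0\<close> by real_asymp
  ultimately have "AE \<omega> in M. eventually (\<lambda>t. \<omega> \<notin> D t) sequentially"
    by (intro AE_eventually_notin_of_prob_le_O_inverse_square D_events)
  then show ?thesis
  proof (rule AE_mp, intro AE_I2 impI)
    fix \<omega> assume "\<omega> \<in> space M" "eventually (\<lambda>t. \<omega> \<notin> D t) sequentially"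
    then show "eventually (\<lambda>t. c / 2 * real t powr (2/3) < (\<Sum>n\<in>{1..t}. Z n \<omega>)) sequentially"
      by (elim eventually_mono) (auto simp: D_def not_le)
  qed
qed

lemma (in prob_space) prob_uniform_less:
  assumes D: "distributed M lborel V (indicator {0..1})" and "0 \<le> a" "a \<le> 1"
  shows "prob {\<omega>\<in>space M. V \<omega> < a} = a"
proof -
  have "emeasure M (V -` {..<a} \<inter> space M) = (\<integral>\<^sup>+x. indicator {0..1} x * indicator {..<a} x \<partial>lborel)"
    by (rule distributed_emeasure[OF D]) simp
  also have "\<dots> = (\<integral>\<^sup>+x. indicator {0..<a} x \<partial>lborel)"
    using assms by (intro nn_integral_cong) (auto simp: indicator_def)
  also have "\<dots> = ennreal a" using assms by simp
  finally have "emeasure M {\<omega>\<in>space M. V \<omega> < a} = ennreal a"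
    by (simp add: vimage_def Int_def conj_commute)
  then show ?thesis using assms by (simp add: emeasure_eq_measure)
qed

lemma (in prob_space) indep_vars_reindex:
  assumes "indep_vars M' X I" "inj_on f J" "f ` J \<subseteq> I"
  shows "indep_vars (\<lambda>j. M' (f j)) (\<lambda>j. X (f j)) J"
proof -
  have "indep_vars (\<lambda>j. PiM {f j} M') (\<lambda>j \<omega>. restrict (\<lambda>i. X i \<omega>) {f j}) J"
    using assms by (intro indep_vars_restrict) (auto simp: disjoint_family_on_def inj_on_eq_iff)
  then have "indep_vars (\<lambda>j. M' (f j)) (\<lambda>j \<omega>. (\<lambda>g. g (f j)) (restrict (\<lambda>i. X i \<omega>) {f j})) J"
    by (rule indep_vars_compose2) (simp add: measurable_component_singleton)
  then show ?thesis by simp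
qed

lemma (in prob_space) indep_vars_Inl_component:
  assumes "indep_vars (\<lambda>_. borel) (\<lambda>k \<omega>. case k of Inl (m, i) \<Rightarrow> Y m i \<omega> | Inr (j, t) \<Rightarrow> U j t \<omega>)
             (Inl ` (S \<times> UNIV) \<union> Inr ` T)" "m \<in> S"
  shows "indep_vars (\<lambda>_. borel) (Y m) UNIV"
proof -
  have "range (\<lambda>i. Inl (m, i)) \<subseteq> Inl ` (S \<times> UNIV) \<union> Inr ` T" using assms(2) by auto
  with indep_vars_reindex[OF assms(1), of "\<lambda>i. Inl (m, i)" UNIV] show ?thesis by (simp add: inj_on_def)
qed

lemma (in prob_space) indep_vars_Inr_component:
  assumes "indep_vars (\<lambda>_. borel) (\<lambda>k \<omega>. case k of Inl (m, i) \<Rightarrow> Y m i \<omega> | Inr (j, t) \<Rightarrow> U j t \<omega>)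
             (Inl ` S \<union> Inr ` T)"
  shows "indep_vars (\<lambda>_. borel) (\<lambda>(j, t). U j t) T"
  using indep_vars_reindex[OF assms, of Inr T] by (simp add: case_prod_unfold)

lemma (in prob_space) indep_vars_explores_stream1:
  fixes U :: "nat \<Rightarrow> nat \<Rightarrow> 'a \<Rightarrow> real"
  assumes "indep_vars (\<lambda>_. borel) (\<lambda>(j, s). U j s) ({0, 1} \<times> UNIV)"
  shows "indep_vars (\<lambda>_. borel) (\<lambda>n \<omega>. of_bool (explores_stream1 L (\<lambda>j s. U j s \<omega>) n) :: real) UNIV"
proof -
  define K where "K n = {(0 :: nat, n), (1, n)}" for n :: nat
  have "indep_vars (\<lambda>n. PiM (K n) (\<lambda>_. borel)) (\<lambda>n \<omega>. restrict (\<lambda>i. case_prod U i \<omega>) (K n)) UNIV"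
    using assms by (intro indep_vars_restrict) (auto simp: K_def disjoint_family_on_def)
  then have "indep_vars (\<lambda>_. borel)
      (\<lambda>n \<omega>. (\<lambda>g. of_bool (g (0, n) < real n powr (-1/3) \<and> g (1, n) < 1 / real L) :: real)
        (restrict (\<lambda>i. case_prod U i \<omega>) (K n))) UNIV"
    by (rule indep_vars_compose2) (simp add: K_def)
  then show ?thesis by (simp add: K_def explores_stream1_def)
qed

lemma (in prob_space) expectation_explores_stream1:
  fixes U :: "nat \<Rightarrow> nat \<Rightarrow> 'a \<Rightarrow> real"
  assumes indep: "indep_vars (\<lambda>_. borel) (\<lambda>(j, s). U j s) ({0, 1} \<times> UNIV)"
    and uniform: "\<And>j n. j \<in> {0, 1} \<Longrightarrow> distributed M lborel (U j n) (indicator {0..1})"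
    and "L \<ge> 1" "n \<ge> 1"
  shows "expectation (\<lambda>\<omega>. of_bool (explores_stream1 L (\<lambda>j s. U j s \<omega>) n)) = 1 / real L * real n powr (-1/3)"
proof -
  define a where "a j = (if j = 0 then real n powr (-1/3) else 1 / real L)" for j :: nat
  have a: "0 \<le> a j" "a j \<le> 1" for j
    using assms(3,4) by (auto simp: a_def powr_minus_divide ge_one_powr_ge_zero)
  have [measurable]: "U j n \<in> borel_measurable M" if "j \<in> {0, 1}" for j
    using distributed_measurable[OF uniform[OF that]] by simp
  define A where "A = (\<Inter>j\<in>{0, 1}. (\<lambda>\<omega>. U j n \<omega>) -` {..<a j} \<inter> space M)"
  have "expectation (\<lambda>\<omega>. of_bool (explores_stream1 L (\<lambda>j s. U j s \<omega>) n)) = expectation (indicator A)"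
    by (intro Bochner_Integration.integral_cong) (auto simp: explores_stream1_def a_def A_def)
  also have "\<dots> = prob A" by (simp add: A_def)
  also have "\<dots> = (\<Prod>j\<in>{0, 1}. prob ((\<lambda>\<omega>. U j n \<omega>) -` {..<a j} \<inter> space M))"
    unfolding A_def using indep_varsD[OF indep_vars_reindex[OF indep, of "\<lambda>j. (j, n)" "{0, 1}"], of "{0, 1}" "\<lambda>j. {..<a j}"]
    by (simp add: inj_on_def)
  also have "\<dots> = a 0 * a 1"
  proof -
    have "prob ((\<lambda>\<omega>. U j n \<omega>) -` {..<a j} \<inter> space M) = a j" if "j \<in> {0, 1}" for j
      using prob_uniform_less[OF uniform[OF that] a] by (simp add: vimage_def Int_def conj_commute)
    then show ?thesis by simp
  qed
  finally show ?thesis by (simp add: a_def)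
qed

lemma (in prob_space) AE_eventually_card_explores_stream1_gt:
  fixes U :: "nat \<Rightarrow> nat \<Rightarrow> 'a \<Rightarrow> real" and L :: nat
  assumes indep: "indep_vars (\<lambda>_. borel) (\<lambda>(j, s). U j s) ({0, 1} \<times> UNIV)"
    and uniform: "\<And>j n. j \<in> {0, 1} \<Longrightarrow> distributed M lborel (U j n) (indicator {0..1})"
    and "L \<ge> 1"
  shows "AE \<omega> in M. eventually (\<lambda>t. 1 / (2 * real L) * real t powr (2/3)
           < real (card {n\<in>{1..t}. explores_stream1 L (\<lambda>j s. U j s \<omega>) n})) sequentially"
proof -
  have "AE \<omega> in M. eventually (\<lambda>t. 1 / real L / 2 * real t powr (2/3)
      < (\<Sum>n\<in>{1..t}. of_bool (explores_stream1 L (\<lambda>j s. U j s \<omega>) n))) sequentially"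
  proof (rule AE_eventually_sum_gt_half_powr[OF indep_vars_explores_stream1[OF indep]])
    show "1 / real L * real n powr (-1/3) \<le> expectation (\<lambda>\<omega>. of_bool (explores_stream1 L (\<lambda>j s. U j s \<omega>) n))"
      if "n \<ge> 1" for n
      using expectation_explores_stream1[OF indep uniform \<open>L \<ge> 1\<close> that] by simp
  qed (use \<open>L \<ge> 1\<close> in simp_all)
  then show ?thesis by (simp add: Int_def mult.commute)
qed

theorem corollary1:
  fixes P :: "'a measure" and M :: nat and \<mu>1 :: real
    and Y :: "nat \<Rightarrow> nat \<Rightarrow> 'a \<Rightarrow> real" and U :: "nat \<Rightarrow> nat \<Rightarrow> 'a \<Rightarrow> real"
  assumes "prob_space P"
    and "M > 1"
    and "\<mu>1 \<noteq> 0"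
    and "prob_space.indep_vars P (\<lambda>_. borel)
           (\<lambda>k \<omega>. case k of Inl (m, i) \<Rightarrow> Y m i \<omega> | Inr (j, t) \<Rightarrow> U j t \<omega>)
           (Inl ` ({1..M} \<times> UNIV) \<union> Inr ` ({..<4} \<times> UNIV))"
    and "\<forall>i. distributed P lborel (Y 1 i) (\<lambda>x. ennreal (normal_density \<mu>1 1 x))"
    and "\<forall>m\<in>{2..M}. \<forall>i. distributed P lborel (Y m i) (\<lambda>x. ennreal (normal_density 0 1 x))"
    and "\<forall>j<4. \<forall>t. distributed P lborel (U j t) (indicator {0..1})"
  shows "AE \<omega> in P. \<exists>t0. \<forall>t>t0.
           T_loc M (\<lambda>m i. Y m i \<omega>) (\<lambda>j s. U j s \<omega>) t 1
             > Max ((\<lambda>m. T_loc M (\<lambda>m i. Y m i \<omega>) (\<lambda>j s. U j s \<omega>) t m) ` {2..M})"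
proof -
  interpret prob_space P by fact
  have Y_indep: "indep_vars (\<lambda>_. borel) (Y m) UNIV" if "m \<in> {1..M}" for m
    using assms(4) that by (rule indep_vars_Inl_component)
  have "indep_vars (\<lambda>_. borel) (\<lambda>(j, s). U j s) ({0, 1} \<times> UNIV)"
    using indep_vars_Inr_component[OF assms(4)] by (rule indep_vars_subset) auto
  then have explore: "AE \<omega> in P. eventually (\<lambda>t. 1 / (2 * real M) * real t powr (2/3)
      < real (card {n\<in>{1..t}. explores_stream1 M (\<lambda>j s. U j s \<omega>) n})) sequentially"
    using assms(2,7) by (intro AE_eventually_card_explores_stream1_gt) auto
  have null: "AE \<omega> in P. \<forall>m\<in>{2..M}.
      eventually (\<lambda>n. \<forall>k<n. window_glr (\<lambda>i. Y m i \<omega>) k n \<le> sqrt (real n)) sequentially"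
    using assms(6) Y_indep by (intro AE_finite_allI AE_eventually_window_glr_le_sqrt) auto
  have signal: "AE \<omega> in P. eventually (\<lambda>N. \<mu>1\<^sup>2 / 8 * real N \<le> window_glr (\<lambda>i. Y 1 i \<omega>) 0 N) sequentially"
    using assms(2,3,5) Y_indep by (intro AE_eventually_window_glr_0_ge) auto
  show ?thesis using null signal explore
  proof eventually_elim
    case (elim \<omega>)
    have "eventually (\<lambda>t. Max ((\<lambda>m. T_loc M (\<lambda>m i. Y m i \<omega>) (\<lambda>j s. U j s \<omega>) t m) ` {2..M})
        < T_loc M (\<lambda>m i. Y m i \<omega>) (\<lambda>j s. U j s \<omega>) t 1) sequentially"
      by (rule eventually_stream1_dominates[OF _ _ _ elim]) (use assms(2,3) in auto)
    then show ?case by (auto simp: eventually_sequentially intro: less_imp_le)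
  qed
qed

end
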